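(* Let $\beta>0$, $0<c_1,\dots,c_p<1$ pairwise distinct, $\vec n\in\mathbb N_0^p$, $i\in\{1,\dots,p\}$ with $n_i\ge1$. The type I multiple Meixner polynomials of the first kind are $$M^{(i)}_{1:\vec n}(x;\beta,\vec c)=\frac{(-1)^{n_i-1}(1-c_i)^{|\vec n|-1+\beta}}{(n_i-1)!(\beta)_{|\vec n|-n_i}c_i^{n_i-1}}\prod_{q\ne i}\Big(\frac{1-c_q}{c_i-c_q}\Big)^{n_q}\sum_{\ell_1,\dots,\ell_p\ge0}\frac{(-n_i+1)_{L}}{(\beta+|\vec n|-n_i)_{L}}(x+\beta)_{\ell_i}\frac{(1-c_i)^{\ell_i}}{\ell_i!}\prod_{q\ne i}(n_q)_{\ell_q}\frac{1}{\ell_q!}\Big(\frac{(1-c_i)c_q}{c_q-c_i}\Big)^{\ell_q},$$ where $L=\ell_1+\cdots+\ell_p$ (the sum is finite since $(-n_i+1)_L=0$ for $L\ge n_i$).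
   Context: Weights $w_i(x)=\frac{\Gamma(\beta+x)}{\Gamma(\beta)\Gamma(x+1)}c_i^x$ on $\mathbb N_0$. Type I polynomials $M^{(1)}_{1:\vec n},\dots,M^{(p)}_{1:\vec n}$: $\deg M^{(i)}_{1:\vec n}\le n_i-1$ (zero if $n_i=0$), $\sum_i\sum_{k\ge0}k^jM^{(i)}_{1:\vec n}(k)w_i(k)=0$ for $0\le j\le|\vec n|-2$, $=1$ for $j=|\vec n|-1$. $(a)_m$ Pochhammer symbol. *)

theory Defs
  imports "HOL-Analysis.Analysis" "HOL-Computational_Algebra.Polynomial"
begin

definition meixner_weight :: "real \<Rightarrow> real \<Rightarrow> nat \<Rightarrow> real" where
  "meixner_weight \<beta> c x = Gamma (\<beta> + real x) / (Gamma \<beta> * Gamma (real x + 1)) * c ^ x"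

definition msize :: "nat \<Rightarrow> (nat \<Rightarrow> nat) \<Rightarrow> nat" where
  "msize p n = (\<Sum>q=1..p. n q)"

definition is_typeI :: "nat \<Rightarrow> real \<Rightarrow> (nat \<Rightarrow> real) \<Rightarrow> (nat \<Rightarrow> nat) \<Rightarrow> (nat \<Rightarrow> real poly) \<Rightarrow> bool" where
  "is_typeI p \<beta> c n M \<longleftrightarrow>
     (\<forall>i\<in>{1..p}. (n i = 0 \<longrightarrow> M i = 0) \<and> (n i \<ge> 1 \<longrightarrow> degree (M i) \<le> n i - 1)) \<and>
     (\<forall>j < msize p n.
        (\<lambda>k. \<Sum>i=1..p. real k ^ j * poly (M i) (real k) * meixner_weight \<beta> (c i) k)
          sums (if j = msize p n - 1 then 1 else 0))"

text \<open>Explicit formula (the sum over l_1..l_p is restricted to l_q < n_i, which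
  contains every nonzero term since (-n_i+1)_L = 0 for L >= n_i).\<close>
definition meixner_typeI_formula ::
  "nat \<Rightarrow> real \<Rightarrow> (nat \<Rightarrow> real) \<Rightarrow> (nat \<Rightarrow> nat) \<Rightarrow> nat \<Rightarrow> real \<Rightarrow> real" where
  "meixner_typeI_formula p \<beta> c n i x =
    (-1) ^ (n i - 1) * (1 - c i) powr (real (msize p n) - 1 + \<beta>)
    / (fact (n i - 1) * pochhammer \<beta> (msize p n - n i) * c i ^ (n i - 1))
    * (\<Prod>q\<in>{1..p}-{i}. ((1 - c q) / (c i - c q)) ^ n q)
    * (\<Sum>l\<in>PiE {1..p} (\<lambda>_. {0..<n i}).
         pochhammer (1 - real (n i)) (\<Sum>q=1..p. l q)
         / pochhammer (\<beta> + real (msize p n) - real (n i)) (\<Sum>q=1..p. l q)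
         * pochhammer (x + \<beta>) (l i) * (1 - c i) ^ l i / fact (l i)
         * (\<Prod>q\<in>{1..p}-{i}. pochhammer (real (n q)) (l q) / fact (l q)
              * ((1 - c i) * c q / (c q - c i)) ^ l q))"

end

theory Submission
  imports Defs "HOL-Computational_Algebra.Formal_Power_Series"
begin

text \<open>Test the orthogonality conditions against the falling factorials \<open>k(k-1)\<dots>(k-r+1)\<close> instead
  of the powers \<open>k ^ j\<close>: against the Meixner weight \<open>w\<^sub>c\<close> the Pochhammer polynomials \<open>(k + \<beta>)\<^sub>m\<close>
  then have the closed-form moments \<open>(\<beta>)\<^sub>r\<^sub>+\<^sub>m c ^ r (1 - c) ^ (-\<beta>-r-m)\<close>.

  Existence: by a multivariate Chu--Vandermonde identity, the \<open>r\<close>-th moment of the explicit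
  \<open>M\<^sub>i\<close> is \<open>(\<beta>)\<^sub>r / (\<beta>)\<^sub>|\<^sub>n\<^sub>|\<^sub>-\<^sub>1\<close> times the residue at \<open>d\<^sub>i = c\<^sub>i / (1 - c\<^sub>i)\<close> of
  \<open>z ^ r / \<Prod>\<^sub>q (z - d\<^sub>q) ^ n\<^sub>q\<close>, and for \<open>r < |n|\<close> these residues add up to \<open>\<delta>\<^sub>r\<^sub>,\<^sub>|\<^sub>n\<^sub>|\<^sub>-\<^sub>1\<close>.

  Uniqueness: expanding the difference of two type I families in the basis \<open>(x + \<beta>)\<^sub>m\<close>, its
  \<open>r\<close>-th moment becomes \<open>(\<beta>)\<^sub>r \<Sum>\<^sub>q d\<^sub>q ^ r P\<^sub>q(r)\<close> with \<open>deg P\<^sub>q < n\<^sub>q\<close>; a sum of exponential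
  polynomials with distinct bases that vanishes for all \<open>r < |n|\<close> is identically zero.\<close>

section \<open>Moments of the Meixner weight\<close>

lemma meixner_weight_eq_pochhammer:
  assumes "\<beta> > 0"
  shows "meixner_weight \<beta> c k = pochhammer \<beta> k / fact k * c ^ k"
proof -
  have nz: "\<beta> \<notin> \<int>\<^sub>\<le>\<^sub>0" using assms by (auto elim!: nonpos_Ints_cases)
  have "Gamma (\<beta> + real k) = pochhammer \<beta> k * Gamma \<beta>"
    using pochhammer_Gamma[OF nz, of k] Gamma_eq_zero_iff[of \<beta>] nz by auto
  moreover have "Gamma (real k + 1) = fact k" using Gamma_fact[of k] by (simp add: add.commute)
  moreover have "Gamma \<beta> \<noteq> 0" using nz by (simp add: Gamma_eq_zero_iff)
  ultimately show ?thesis unfolding meixner_weight_def by (simp add: field_simps)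
qed

lemma sums_pochhammer_binomial:
  fixes z a :: real
  assumes "\<bar>z\<bar> < 1"
  shows "(\<lambda>s. pochhammer a s / fact s * z ^ s) sums (1 - z) powr (- a)"
proof -
  have "(\<lambda>s. ((- a) gchoose s) * (- z) ^ s) sums (1 + - z) powr (- a)"
    using gen_binomial_real[of "- z" "- a"] assms by simp
  moreover have "((- a) gchoose s) * (- z) ^ s = pochhammer a s / fact s * z ^ s" for s
    by (simp add: gbinomial_pochhammer power_mult_distrib[symmetric])
  ultimately show ?thesis by simp
qed

definition falling_fact :: "nat \<Rightarrow> real \<Rightarrow> real" where
  "falling_fact r x = (\<Prod>t<r. x - real t)"

lemma falling_fact_of_nat_less: "k < r \<Longrightarrow> falling_fact r (real k) = 0"
  unfolding falling_fact_def by (rule prod_zero) auto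

lemma falling_fact_of_nat_add: "falling_fact r (real (s + r)) = fact (s + r) / fact s"
proof (induction r arbitrary: s)
  case 0
  then show ?case by (simp add: falling_fact_def)
next
  case (Suc r)
  have "falling_fact (Suc r) (real (s + Suc r)) = falling_fact r (real (Suc s + r)) * (real s + 1)"
    by (simp add: falling_fact_def)
  also have "\<dots> = fact (Suc s + r) / fact (Suc s) * (real s + 1)"
    by (simp only: Suc.IH)
  also have "\<dots> = fact (s + Suc r) / fact s"
    by (simp add: divide_simps)
  finally show ?case .
qed

lemma sums_falling_fact_pochhammer_meixner_weight:
  assumes "\<beta> > 0" "0 < c" "c < 1"
  shows "(\<lambda>k. falling_fact r (real k) * pochhammer (real k + \<beta>) m * meixner_weight \<beta> c k) sums
          (pochhammer \<beta> (r + m) * c ^ r * (1 - c) powr (- (\<beta> + real r + real m)))"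
proof -
  let ?f = "\<lambda>k. falling_fact r (real k) * pochhammer (real k + \<beta>) m * meixner_weight \<beta> c k"
  let ?a = "\<beta> + real r + real m"
  have shifted_term: "?f (s + r) = pochhammer \<beta> (r + m) * c ^ r * (pochhammer ?a s / fact s * c ^ s)" for s
  proof -
    have "pochhammer \<beta> (s + r) * pochhammer (real (s + r) + \<beta>) m = pochhammer \<beta> ((r + m) + s)"
      using pochhammer_product'[of \<beta> "s + r" m] by (simp add: add_ac)
    also have "\<dots> = pochhammer \<beta> (r + m) * pochhammer ?a s"
      using pochhammer_product'[of \<beta> "r + m" s] by (simp add: add_ac)
    finally have poch: "pochhammer \<beta> (s + r) * pochhammer (real (s + r) + \<beta>) m =
        pochhammer \<beta> (r + m) * pochhammer ?a s" .
    have "?f (s + r) = fact (s + r) / fact s * pochhammer (real (s + r) + \<beta>) m *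
        (pochhammer \<beta> (s + r) / fact (s + r) * c ^ (s + r))"
      by (simp only: falling_fact_of_nat_add meixner_weight_eq_pochhammer[OF assms(1)])
    also have "\<dots> = (pochhammer \<beta> (s + r) * pochhammer (real (s + r) + \<beta>) m) / fact s * c ^ s * c ^ r"
      by (simp add: power_add field_simps)
    finally show ?thesis
      unfolding poch by (simp add: field_simps)
  qed
  have "(\<lambda>s. pochhammer \<beta> (r + m) * c ^ r * (pochhammer ?a s / fact s * c ^ s)) sums
        (pochhammer \<beta> (r + m) * c ^ r * (1 - c) powr (- ?a))"
    using assms by (intro sums_mult sums_pochhammer_binomial) auto
  then have "(\<lambda>s. ?f (s + r)) sums (pochhammer \<beta> (r + m) * c ^ r * (1 - c) powr (- ?a))"
    by (simp only: shifted_term)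
  moreover have "(\<Sum>k<r. ?f k) = 0" by (simp add: falling_fact_of_nat_less)
  ultimately show ?thesis
    using sums_iff_shift[of ?f r] by simp
qed

section \<open>Monic polynomial bases\<close>

definition pochhammer_poly :: "real \<Rightarrow> nat \<Rightarrow> real poly" where
  "pochhammer_poly \<beta> m = pochhammer [:\<beta>, 1:] m"

lemma poly_pochhammer_poly: "poly (pochhammer_poly \<beta> m) x = pochhammer (x + \<beta>) m"
  by (induction m) (simp_all add: pochhammer_poly_def pochhammer_Suc algebra_simps)

lemma monic_product_of_linear:
  fixes a :: "nat \<Rightarrow> real"
  shows "degree (\<Prod>t<m. [:a t, 1:]) = m \<and> coeff (\<Prod>t<m. [:a t, 1:]) m = 1"
proof (induction m)
  case 0
  then show ?case by simp
next
  case (Suc m)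
  let ?P = "\<Prod>t<m. [:a t, 1:]"
  have "?P \<noteq> 0" using Suc by auto
  then have "degree (?P * [:a m, 1:]) = degree ?P + degree [:a m, 1:]"
    by (intro degree_mult_eq) auto
  then have "degree (?P * [:a m, 1:]) = Suc m"
    using Suc by simp
  moreover have "lead_coeff (?P * [:a m, 1:]) = 1"
    unfolding lead_coeff_mult using Suc by simp
  ultimately show ?case by simp
qed

lemma pochhammer_poly_monic:
  "degree (pochhammer_poly \<beta> m) = m \<and> coeff (pochhammer_poly \<beta> m) m = 1"
proof -
  have "pochhammer_poly \<beta> m = (\<Prod>t<m. [:\<beta> + real t, 1:])"
    by (simp add: pochhammer_poly_def pochhammer_prod of_nat_poly prod.atLeast0_lessThan_Suc_shift
        atLeast0LessThan)
  then show ?thesis using monic_product_of_linear by simp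
qed

definition falling_poly :: "nat \<Rightarrow> real poly" where
  "falling_poly r = (\<Prod>t<r. [:- real t, 1:])"

lemma poly_falling_poly: "poly (falling_poly r) x = falling_fact r x"
  by (simp add: falling_poly_def falling_fact_def poly_prod)

lemma falling_poly_monic: "degree (falling_poly r) = r \<and> coeff (falling_poly r) r = 1"
  unfolding falling_poly_def by (rule monic_product_of_linear)

lemma monic_basis_coeff_eq_0:
  fixes B :: "nat \<Rightarrow> real poly"
  assumes "\<And>m. degree (B m) = m" and "n \<le> k"
  shows "coeff (\<Sum>m<n. smult (a m) (B m)) k = 0"
proof -
  have "coeff (B m) k = 0" if "m < n" for m
    by (rule coeff_eq_0) (use assms that in simp)
  then show ?thesis by (auto simp: coeff_sum intro!: sum.neutral)
qed

lemma monic_basis_coeff_top: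
  fixes B :: "nat \<Rightarrow> real poly"
  assumes "\<And>m. degree (B m) = m \<and> coeff (B m) m = 1"
  shows "coeff (\<Sum>m<Suc n. smult (a m) (B m)) n = a n"
  using monic_basis_coeff_eq_0[of B n n a] assms by simp

lemma monic_basis_expansion:
  fixes B :: "nat \<Rightarrow> real poly"
  assumes "\<And>m. degree (B m) = m \<and> coeff (B m) m = 1"
  shows "D = 0 \<or> degree D < n \<Longrightarrow> \<exists>a. D = (\<Sum>m<n. smult (a m) (B m))"
proof (induction n arbitrary: D)
  case 0
  then show ?case by auto
next
  case (Suc n)
  let ?D = "D - smult (coeff D n) (B n)"
  have "?D = 0 \<or> degree ?D < n"
  proof (cases "?D = 0")
    case False
    have "degree ?D \<le> n"
      using Suc.prems assms[of n] by (intro degree_diff_le) (auto simp: degree_smult_le)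
    moreover have "coeff ?D n = 0" using assms[of n] by simp
    ultimately show ?thesis using False leading_coeff_neq_0 by (metis le_neq_implies_less)
  qed simp
  then obtain a where a: "?D = (\<Sum>m<n. smult (a m) (B m))" using Suc.IH by blast
  have "(\<Sum>m<n. smult ((a(n := coeff D n)) m) (B m)) = (\<Sum>m<n. smult (a m) (B m))"
    by (rule sum.cong) auto
  then have "D = (\<Sum>m<Suc n. smult ((a(n := coeff D n)) m) (B m))"
    using a by (simp add: algebra_simps)
  then show ?case by blast
qed

lemma monic_basis_independent:
  fixes B :: "nat \<Rightarrow> real poly"
  assumes "\<And>m. degree (B m) = m \<and> coeff (B m) m = 1"
  shows "(\<Sum>m<n. smult (a m) (B m)) = 0 \<Longrightarrow> m < n \<Longrightarrow> a m = 0"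
proof (induction n)
  case 0
  then show ?case by simp
next
  case (Suc n)
  have "a n = 0"
    using monic_basis_coeff_top[where B = B and n = n and a = a, OF assms] Suc.prems(1) by (metis coeff_0)
  then show ?case using Suc by (cases "m = n") auto
qed

section \<open>Sums of exponential polynomials\<close>

definition shift_poly :: "real poly \<Rightarrow> real poly" where
  "shift_poly Q = Q \<circ>\<^sub>p [:1, 1:]"

lemma poly_shift_poly: "poly (shift_poly Q) x = poly Q (x + 1)"
  by (simp add: shift_poly_def poly_pcompose add.commute)

lemma degree_shift_poly: "degree (shift_poly Q) = degree Q"
  by (simp add: shift_poly_def degree_pcompose)

lemma lead_coeff_shift_poly: "lead_coeff (shift_poly Q) = lead_coeff Q"
  using lead_coeff_comp[of "[:1, 1:]" Q] by (simp add: shift_poly_def)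

lemma coeff_shift_poly_diff_degree:
  "coeff (smult a (shift_poly Q) - smult b Q) (degree Q) = (a - b) * lead_coeff Q"
  using lead_coeff_shift_poly[of Q] by (simp add: degree_shift_poly algebra_simps)

lemma degree_shift_poly_diff_le: "degree (smult a (shift_poly Q) - smult b Q) \<le> degree Q"
  by (metis degree_diff_le degree_shift_poly degree_smult_le le_trans)

lemma degree_shift_poly_diff_less:
  assumes "Q = 0 \<or> degree Q < k"
  shows "smult a (shift_poly Q) - smult a Q = 0 \<or> degree (smult a (shift_poly Q) - smult a Q) < k - 1"
proof (cases "smult a (shift_poly Q) - smult a Q = 0")
  case False
  then have "Q \<noteq> 0" by (auto simp: shift_poly_def)
  have "coeff (smult a (shift_poly Q) - smult a Q) (degree Q) = 0"
    using coeff_shift_poly_diff_degree[of a Q a] by simp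
  then have "degree (smult a (shift_poly Q) - smult a Q) < degree Q"
    using degree_shift_poly_diff_le[of a Q a] False leading_coeff_neq_0 by (metis le_neq_implies_less)
  then show ?thesis using assms \<open>Q \<noteq> 0\<close> by auto
qed simp

lemma shift_poly_fixed_imp_const:
  assumes "shift_poly Q = Q"
  shows "Q = [:poly Q 0:]"
proof (rule ccontr)
  assume "Q \<noteq> [:poly Q 0:]"
  then have nz: "Q - [:poly Q 0:] \<noteq> 0" by simp
  have "poly Q (real k) = poly Q 0" for k
  proof (induction k)
    case (Suc k)
    then show ?case using assms poly_shift_poly[of Q "real k"] by (simp add: add.commute)
  qed simp
  then have "range real \<subseteq> {x. poly (Q - [:poly Q 0:]) x = 0}" by auto
  moreover have "infinite (range (real :: nat \<Rightarrow> real))"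
    using range_inj_infinite[of real] inj_of_nat by blast
  ultimately show False using poly_roots_finite[OF nz] finite_subset by blast
qed

lemma sum_fun_upd_decrement:
  fixes n :: "nat \<Rightarrow> nat"
  assumes "finite I" "p \<in> I" "n p \<ge> 1"
  shows "sum (n(p := n p - 1)) I = sum n I - 1"
proof -
  have "sum (n(p := n p - 1)) (I - {p}) = sum n (I - {p})" by (rule sum.cong) auto
  then show ?thesis using assms by (simp add: sum.remove)
qed

lemma exp_poly_sum_shift:
  "(\<Sum>q\<in>I. d q ^ r * poly (smult (d q) (shift_poly (P q)) - smult e (P q)) (real r)) =
   (\<Sum>q\<in>I. d q ^ Suc r * poly (P q) (real (Suc r))) - e * (\<Sum>q\<in>I. d q ^ r * poly (P q) (real r))"
  by (simp add: poly_shift_poly sum_distrib_left sum_subtractf algebra_simps)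

text \<open>The difference operator \<open>E - d p\<^sub>0\<close> in \<open>r\<close> lowers the degree bound of
  \<open>P p\<^sub>0\<close> by one, keeps the other degree bounds, and leaves a sum vanishing one step less.\<close>
lemma exp_poly_sum_eq_0_imp_eq_0:
  fixes d :: "nat \<Rightarrow> real" and P :: "nat \<Rightarrow> real poly"
  assumes "finite I" "inj_on d I" "\<forall>q\<in>I. d q \<noteq> 0"
  shows "sum n I = N \<Longrightarrow> \<forall>q\<in>I. P q = 0 \<or> degree (P q) < n q \<Longrightarrow>
     \<forall>r<N. (\<Sum>q\<in>I. d q ^ r * poly (P q) (real r)) = 0 \<Longrightarrow> q \<in> I \<Longrightarrow> P q = 0"
proof (induction N arbitrary: n P q)
  case 0
  then show ?case using assms(1) by auto
next
  case (Suc N)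
  obtain p0 where p0: "p0 \<in> I" "n p0 \<ge> 1"
    using Suc.prems(1) by (metis One_nat_def Suc_leI not_gr0 sum.neutral nat.distinct(1))
  define P' where "P' q = smult (d q) (shift_poly (P q)) - smult (d p0) (P q)" for q
  have degree_P': "P' q = 0 \<or> degree (P' q) < (n(p0 := n p0 - 1)) q" if "q \<in> I" for q
  proof (cases "q = p0")
    case True
    then show ?thesis
      using degree_shift_poly_diff_less[of "P q" "n q" "d p0"] Suc.prems(2) that by (simp add: P'_def)
  next
    case False
    then show ?thesis
      using degree_shift_poly_diff_le[of "d q" "P q" "d p0"] Suc.prems(2) that
      by (auto simp: P'_def shift_poly_def)
  qed
  have "\<forall>r<N. (\<Sum>q\<in>I. d q ^ r * poly (P' q) (real r)) = 0"
  proof (intro allI impI)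
    fix r assume "r < N"
    then have "(\<Sum>q\<in>I. d q ^ Suc r * poly (P q) (real (Suc r))) = 0"
      using Suc.prems(3) Suc_mono by blast
    moreover have "(\<Sum>q\<in>I. d q ^ r * poly (P q) (real r)) = 0"
      using Suc.prems(3) \<open>r < N\<close> by simp
    ultimately show "(\<Sum>q\<in>I. d q ^ r * poly (P' q) (real r)) = 0"
      unfolding P'_def exp_poly_sum_shift by simp
  qed
  moreover have "sum (n(p0 := n p0 - 1)) I = N"
    using sum_fun_upd_decrement[where n = n, OF assms(1) p0] Suc.prems(1) by simp
  ultimately have P'_0: "P' q = 0" if "q \<in> I" for q
    using Suc.IH degree_P' that by blast
  have others: "P q = 0" if "q \<in> I" "q \<noteq> p0" for q
  proof (rule ccontr)
    assume "P q \<noteq> 0"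
    moreover have "d q \<noteq> d p0" using assms(2) that p0 by (auto dest: inj_onD)
    ultimately have "coeff (P' q) (degree (P q)) \<noteq> 0"
      unfolding P'_def coeff_shift_poly_diff_degree by simp
    then show False using P'_0[OF that(1)] by simp
  qed
  have "shift_poly (P p0) = P p0"
    using P'_0[OF p0(1)] assms(3) p0(1) by (simp add: P'_def flip: smult_diff_right)
  then have const: "P p0 = [:poly (P p0) 0:]" by (rule shift_poly_fixed_imp_const)
  have "(\<Sum>q\<in>I. d q ^ 0 * poly (P q) (real 0)) = poly (P p0) 0"
    using assms(1) p0 others by (simp add: sum.remove)
  then have "poly (P p0) 0 = 0" using Suc.prems(3) by auto
  then show ?case using const others Suc.prems(4) by (cases "q = p0") auto
qed

section \<open>A residue sum\<close>

definition fps_neg_binomial :: "nat \<Rightarrow> real \<Rightarrow> real fps" where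
  "fps_neg_binomial n a = Abs_fps (\<lambda>s. ((- real n) gchoose s) * a ^ s)"

lemma fps_neg_binomial_nth: "fps_nth (fps_neg_binomial n a) s = ((- real n) gchoose s) * a ^ s"
  by (simp add: fps_neg_binomial_def)

lemma fps_neg_binomial_0: "fps_neg_binomial 0 a = 1"
  by (simp add: fps_eq_iff fps_neg_binomial_nth gbinomial_0_left)

lemma fps_neg_binomial_Suc:
  "(1 + fps_const a * fps_X) * fps_neg_binomial (Suc n) a = fps_neg_binomial n a"
proof (rule fps_ext)
  fix s
  show "fps_nth ((1 + fps_const a * fps_X) * fps_neg_binomial (Suc n) a) s = fps_nth (fps_neg_binomial n a) s"
  proof (cases s)
    case 0
    then show ?thesis by (simp add: fps_neg_binomial_nth)
  next
    case (Suc k)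
    have pascal: "((- real (Suc n)) gchoose Suc k) + ((- real (Suc n)) gchoose k) = (- real n) gchoose Suc k"
      using gbinomial_Suc_Suc[of "- real (Suc n)" k] by (simp add: algebra_simps)
    show ?thesis
      using Suc by (simp add: fps_neg_binomial_nth algebra_simps flip: pascal)
  qed
qed

lemma fps_binomial_of_nat_Suc: "fps_binomial (real (Suc r)) = (1 + fps_X) * fps_binomial (real r :: real)"
  using fps_binomial_add_mult[of "real r" 1] fps_binomial_of_nat[of 1, where 'a = real]
  by (simp add: mult.commute add.commute)

definition node_ratio :: "(nat \<Rightarrow> real) \<Rightarrow> nat \<Rightarrow> nat \<Rightarrow> real" where
  "node_ratio d i q = d q / (d q - d i)"

definition node_gap_prod :: "nat set \<Rightarrow> (nat \<Rightarrow> real) \<Rightarrow> (nat \<Rightarrow> nat) \<Rightarrow> nat \<Rightarrow> real" where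
  "node_gap_prod I d n i = (\<Prod>q\<in>I-{i}. (d i - d q) ^ n q)"

definition residue_series :: "nat set \<Rightarrow> (nat \<Rightarrow> real) \<Rightarrow> (nat \<Rightarrow> nat) \<Rightarrow> nat \<Rightarrow> real fps" where
  "residue_series I d n i = (\<Prod>q\<in>I-{i}. fps_neg_binomial (n q) (1 - node_ratio d i q))"

text \<open>The residue at \<open>d i\<close> of \<open>z ^ r / (\<Prod>q\<in>I. (z - d q) ^ n q)\<close>, computed in the local
  variable \<open>z = d i * (1 + X)\<close>.\<close>
definition local_residue :: "nat set \<Rightarrow> (nat \<Rightarrow> real) \<Rightarrow> (nat \<Rightarrow> nat) \<Rightarrow> nat \<Rightarrow> nat \<Rightarrow> real" where
  "local_residue I d n i r = (if n i = 0 then 0 else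
     d i ^ r / d i ^ (n i - 1) / node_gap_prod I d n i *
     fps_nth (fps_binomial (real r) * residue_series I d n i) (n i - 1))"

definition residue_sum :: "nat set \<Rightarrow> (nat \<Rightarrow> real) \<Rightarrow> (nat \<Rightarrow> nat) \<Rightarrow> nat \<Rightarrow> real" where
  "residue_sum I d n r = (\<Sum>i\<in>I. local_residue I d n i r)"

lemma local_residue_Suc_diff:
  assumes "n i \<noteq> 0"
  shows "local_residue I d n i (Suc r) - e * local_residue I d n i r =
    d i ^ r / d i ^ (n i - 1) / node_gap_prod I d n i *
    (d i * fps_nth ((1 + fps_X) * (fps_binomial (real r) * residue_series I d n i)) (n i - 1)
     - e * fps_nth (fps_binomial (real r) * residue_series I d n i) (n i - 1))"
proof -
  define F where "F = fps_binomial (real r) * residue_series I d n i"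
  have "fps_binomial (real (Suc r)) * residue_series I d n i = (1 + fps_X) * F"
    by (simp only: F_def fps_binomial_of_nat_Suc mult.assoc)
  then show ?thesis
    using assms by (simp add: local_residue_def F_def[symmetric] divide_inverse algebra_simps)
qed

lemma fps_nth_neg_binomial_contiguity:
  fixes x y a :: real
  assumes "(x - y) * a = x"
  shows "x * fps_nth ((1 + fps_X) * (G * fps_neg_binomial (Suc k) a)) m - y * fps_nth (G * fps_neg_binomial (Suc k) a) m =
    (x - y) * fps_nth (G * fps_neg_binomial k a) m"
proof -
  let ?E = "fps_neg_binomial (Suc k) a"
  have lin: "fps_const x * (1 + fps_X) - fps_const y = fps_const (x - y) * (1 + fps_const a * fps_X)"
    using assms by (intro fps_ext) (auto simp: fps_X_nth algebra_simps)
  have "x * fps_nth ((1 + fps_X) * (G * ?E)) m - y * fps_nth (G * ?E) m =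
      fps_nth ((fps_const x * (1 + fps_X) - fps_const y) * (G * ?E)) m"
    by (simp only: left_diff_distrib mult.assoc fps_sub_nth fps_mult_left_const_nth)
  also have "(fps_const x * (1 + fps_X) - fps_const y) * (G * ?E) =
      fps_const (x - y) * (G * ((1 + fps_const a * fps_X) * ?E))"
    unfolding lin by (simp only: mult_ac)
  finally show ?thesis
    by (simp only: fps_neg_binomial_Suc fps_mult_left_const_nth)
qed

text \<open>Contiguity in the node \<open>d p\<close>: multiplying the integrand by \<open>z - d p\<close> lowers \<open>n p\<close> by one.\<close>
lemma local_residue_contiguity_other:
  assumes fin: "finite I" and inj: "inj_on d I"
    and p: "p \<in> I" "n p \<ge> 1" and i: "i \<in> I" "i \<noteq> p"
  shows "local_residue I d n i (Suc r) - d p * local_residue I d n i r =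
         local_residue I d (n(p := n p - 1)) i r"
proof (cases "n i = 0")
  case True
  then show ?thesis using i by (simp add: local_residue_def)
next
  case ni: False
  define n' where "n' = n(p := n p - 1)"
  define m where "m = n i - 1"
  define a where "a = 1 - node_ratio d i p"
  define R where "R = (\<Prod>q\<in>I-{i}-{p}. fps_neg_binomial (n q) (1 - node_ratio d i q))"
  define KR where "KR = (\<Prod>q\<in>I-{i}-{p}. (d i - d q) ^ n q)"
  obtain k where k: "n p = Suc k" using p by (cases "n p") auto
  have dip: "d i - d p \<noteq> 0" using inj p i by (auto dest: inj_onD)
  have pin: "p \<in> I - {i}" using p i by auto
  have n'i: "n' i = n i" using i by (simp add: n'_def)
  have R': "R = (\<Prod>q\<in>I-{i}-{p}. fps_neg_binomial (n' q) (1 - node_ratio d i q))"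
    unfolding R_def by (intro prod.cong) (auto simp: n'_def)
  have KR': "KR = (\<Prod>q\<in>I-{i}-{p}. (d i - d q) ^ n' q)"
    unfolding KR_def by (intro prod.cong) (auto simp: n'_def)
  have series: "residue_series I d n i = fps_neg_binomial (Suc k) a * R"
    "residue_series I d n' i = fps_neg_binomial k a * R"
     apply (simp_all only: residue_series_def R_def R'[unfolded R_def] a_def)
    using fin pin k by (simp_all add: prod.remove n'_def)
  have gap: "node_gap_prod I d n i = (d i - d p) * node_gap_prod I d n' i"
  proof -
    have "node_gap_prod I d n i = (d i - d p) ^ Suc k * KR"
      unfolding node_gap_prod_def KR_def using fin pin k by (simp add: prod.remove)
    moreover have "node_gap_prod I d n' i = (d i - d p) ^ k * KR"
      unfolding node_gap_prod_def KR' using fin pin k by (simp add: prod.remove n'_def)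
    ultimately show ?thesis by simp
  qed
  have "(d i - d p) * a = d i" unfolding a_def node_ratio_def using dip
    by (simp add: field_simps)
  moreover have "fps_binomial (real r) * residue_series I d n i =
      (fps_binomial (real r) * R) * fps_neg_binomial (Suc k) a"
    "fps_binomial (real r) * residue_series I d n' i = (fps_binomial (real r) * R) * fps_neg_binomial k a"
    unfolding series by (simp_all only: mult_ac)
  ultimately have key: "d i * fps_nth ((1 + fps_X) * (fps_binomial (real r) * residue_series I d n i)) m -
      d p * fps_nth (fps_binomial (real r) * residue_series I d n i) m =
      (d i - d p) * fps_nth (fps_binomial (real r) * residue_series I d n' i) m"
    using fps_nth_neg_binomial_contiguity by metis
  show ?thesis
    unfolding local_residue_Suc_diff[where n = n and i = i, OF ni] m_def[symmetric] key n'_def[symmetric]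
    using ni n'i dip by (simp add: local_residue_def gap m_def)
qed

lemma local_residue_contiguity_self:
  assumes "d i \<noteq> 0" and "n i \<ge> 1"
  shows "local_residue I d n i (Suc r) - d i * local_residue I d n i r =
         local_residue I d (n(i := n i - 1)) i r"
proof -
  define n' where "n' = n(i := n i - 1)"
  define F where "F = fps_binomial (real r) * residue_series I d n i"
  define m where "m = n i - 1"
  have same: "residue_series I d n' i = residue_series I d n i"
    "node_gap_prod I d n' i = node_gap_prod I d n i"
    unfolding residue_series_def node_gap_prod_def by (auto intro!: prod.cong simp: n'_def)
  have "(1 + fps_X) * F = F + fps_X * F"
    by (simp add: algebra_simps)
  then have "d i * fps_nth ((1 + fps_X) * F) m - d i * fps_nth F m = d i * fps_nth (fps_X * F) m"
    by (simp only: fps_add_nth algebra_simps)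
  then have "local_residue I d n i (Suc r) - d i * local_residue I d n i r =
      d i ^ r / d i ^ m / node_gap_prod I d n i * (d i * fps_nth (fps_X * F) m)"
    using local_residue_Suc_diff[where n = n and i = i and r = r and I = I and d = d and e = "d i"] assms(2)
    unfolding F_def m_def by simp
  also have "\<dots> = local_residue I d n' i r"
  proof (cases m)
    case 0
    then show ?thesis by (simp add: local_residue_def n'_def m_def)
  next
    case (Suc m')
    then show ?thesis
      using assms(1) same by (simp add: local_residue_def n'_def m_def F_def)
  qed
  finally show ?thesis unfolding n'_def .
qed

lemma residue_sum_contiguity:
  assumes "finite I" "inj_on d I" "\<forall>q\<in>I. d q \<noteq> 0" "p \<in> I" "n p \<ge> 1"
  shows "residue_sum I d n (Suc r) - d p * residue_sum I d n r = residue_sum I d (n(p := n p - 1)) r"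
proof -
  have "local_residue I d n i (Suc r) - d p * local_residue I d n i r =
        local_residue I d (n(p := n p - 1)) i r" if "i \<in> I" for i
    using local_residue_contiguity_other[where n = n, OF assms(1,2,4,5) that]
      local_residue_contiguity_self[of d p n]
      assms(3,4,5) by (cases "i = p") auto
  then show ?thesis
    unfolding residue_sum_def sum_distrib_left sum_subtractf[symmetric] by (rule sum.cong[OF refl])
qed

lemma residue_sum_single_node:
  assumes "finite I" "p \<in> I" "n p \<ge> 1" "\<forall>q\<in>I-{p}. n q = 0"
  shows "residue_sum I d n r = d p ^ r / d p ^ (n p - 1) * (real r gchoose (n p - 1))"
proof -
  have "residue_series I d n p = 1"
    unfolding residue_series_def using assms(4) by (intro prod.neutral) (auto simp: fps_neg_binomial_0)
  moreover have "(\<Sum>q\<in>I-{p}. local_residue I d n q r) = 0"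
    using assms(4) by (intro sum.neutral) (auto simp: local_residue_def)
  ultimately show ?thesis
    using assms by (simp add: residue_sum_def local_residue_def node_gap_prod_def sum.remove)
qed

text \<open>The integrand has degree \<open>r - N \<le> -1\<close>, so its residues sum to \<open>1\<close> if \<open>r = N - 1\<close> and
  to \<open>0\<close> otherwise. Induction on \<open>N\<close>: subtracting the contiguity relations of two distinct nodes
  shows that the sum vanishes below \<open>N - 1\<close>.\<close>
lemma residue_sum_eq:
  assumes fin: "finite I" and inj: "inj_on d I" and nz: "\<forall>q\<in>I. d q \<noteq> 0"
  shows "sum n I = N \<Longrightarrow> N \<ge> 1 \<Longrightarrow> r < N \<Longrightarrow> residue_sum I d n r = (if r = N - 1 then 1 else 0)"
proof (induction N arbitrary: n r rule: less_induct)
  case (less N)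
  obtain p1 where p1: "p1 \<in> I" "n p1 \<ge> 1"
    using less.prems(1,2) by (metis One_nat_def Suc_leI not_gr0 sum.neutral not_one_le_zero)
  show ?case
  proof (cases "\<exists>p2\<in>I. p2 \<noteq> p1 \<and> n p2 \<ge> 1")
    case True
    then obtain p2 where p2: "p2 \<in> I" "p2 \<noteq> p1" "n p2 \<ge> 1" by blast
    define n1 where "n1 = n(p1 := n p1 - 1)"
    define n2 where "n2 = n(p2 := n p2 - 1)"
    have "sum n {p1, p2} \<le> sum n I" using fin p1 p2 by (intro sum_mono2) auto
    then have N2: "N \<ge> 2" using p1 p2 less.prems(1) by simp
    have "sum n1 I = N - 1" "sum n2 I = N - 1"
      using sum_fun_upd_decrement[where n = n, OF fin p1] sum_fun_upd_decrement[where n = n, OF fin p2(1,3)]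
        less.prems(1) by (simp_all add: n1_def n2_def)
    then have IH: "residue_sum I d n1 r' = (if r' = N - 2 then 1 else 0)"
      "residue_sum I d n2 r' = (if r' = N - 2 then 1 else 0)" if "r' < N - 1" for r'
      using less.IH[of "N - 1"] N2 that by (simp_all add: numeral_2_eq_2)
    have c1: "residue_sum I d n (Suc r') - d p1 * residue_sum I d n r' = residue_sum I d n1 r'" for r'
      unfolding n1_def by (rule residue_sum_contiguity[where n = n, OF fin inj nz p1])
    have c2: "residue_sum I d n (Suc r') - d p2 * residue_sum I d n r' = residue_sum I d n2 r'" for r'
      unfolding n2_def by (rule residue_sum_contiguity[where n = n, OF fin inj nz p2(1,3)])
    have "d p2 - d p1 \<noteq> 0" using inj p1 p2 by (auto dest: inj_onD)
    moreover have "(d p2 - d p1) * residue_sum I d n r' = residue_sum I d n1 r' - residue_sum I d n2 r'" for r'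
      using c1[of r'] c2[of r'] by (simp add: algebra_simps)
    ultimately have low: "residue_sum I d n r' = 0" if "r' < N - 1" for r'
      using IH[OF that] by (metis diff_self mult_eq_0_iff)
    show ?thesis
    proof (cases "r = N - 1")
      case False
      then show ?thesis using low less.prems(3) by simp
    next
      case True
      then have "residue_sum I d n r = d p1 * residue_sum I d n (N - 2) + residue_sum I d n1 (N - 2)"
        using c1[of "N - 2"] N2 by (simp add: Suc_diff_Suc numeral_2_eq_2 algebra_simps)
      then show ?thesis using True low[of "N - 2"] IH(1)[of "N - 2"] N2 by simp
    qed
  next
    case False
    then have z: "\<forall>q\<in>I-{p1}. n q = 0" by auto
    then have "n p1 = N" using fin p1 less.prems(1) by (simp add: sum.remove)
    then have "residue_sum I d n r = d p1 ^ r / d p1 ^ (N - 1) * (real r gchoose (N - 1))"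
      using residue_sum_single_node[where n = n, OF fin p1 z] by simp
    moreover have "real r gchoose (N - 1) = (if r = N - 1 then 1 else 0)"
      using less.prems(3) by (simp flip: binomial_gbinomial) arith
    ultimately show ?thesis using nz p1 by simp
  qed
qed

section \<open>A multivariate Chu--Vandermonde identity\<close>

lemma sum_atMost_triangle_swap: "(\<Sum>s\<le>(t::nat). \<Sum>l\<le>s. f s l) = (\<Sum>l\<le>t. \<Sum>s\<in>{l..t}. (f s l :: 'a::comm_monoid_add))"
proof (induction t)
  case 0 then show ?case by simp
next
  case (Suc t)
  have "(\<Sum>l\<le>Suc t. \<Sum>s\<in>{l..Suc t}. f s l) = (\<Sum>l\<le>t. \<Sum>s\<in>{l..Suc t}. f s l) + f (Suc t) (Suc t)"
    by simp
  also have "(\<Sum>l\<le>t. \<Sum>s\<in>{l..Suc t}. f s l) = (\<Sum>l\<le>t. (\<Sum>s\<in>{l..t}. f s l) + f (Suc t) l)"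
    by (intro sum.cong refl) (simp add: sum.cl_ivl_Suc)
  finally show ?case using Suc by (simp add: sum.distrib add_ac)
qed

lemma fps_neg_binomial_nth_expand:
  "fps_nth (fps_neg_binomial n (1 - e)) s = (\<Sum>l\<le>s. pochhammer (real n) l / fact l * e ^ l * ((- real n - real l) gchoose (s - l)))"
proof -
  have "fps_nth (fps_neg_binomial n (1 - e)) s = ((- real n) gchoose s) * (\<Sum>l\<le>s. of_nat (s choose l) * (- e) ^ l * 1 ^ (s - l))"
    using binomial_ring[of "- e" 1 s] by (simp add: fps_neg_binomial_nth)
  also have "\<dots> = (\<Sum>l\<le>s. ((- real n) gchoose s) * (of_nat s gchoose l) * (- e) ^ l)"
    by (simp add: sum_distrib_left binomial_gbinomial algebra_simps)
  also have "\<dots> = (\<Sum>l\<le>s. ((- real n) gchoose l) * ((- real n - real l) gchoose (s - l)) * (- e) ^ l)"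
    by (intro sum.cong refl) (simp add: gbinomial_trinomial_revision)
  also have "\<dots> = (\<Sum>l\<le>s. pochhammer (real n) l / fact l * e ^ l * ((- real n - real l) gchoose (s - l)))"
  proof (intro sum.cong refl)
    fix l
    have "((- real n) gchoose l) = (- 1) ^ l * pochhammer (real n) l / fact l"
      by (simp add: gbinomial_pochhammer)
    moreover have "(- e) ^ l = (- 1) ^ l * e ^ l" by (simp add: power_mult_distrib[symmetric])
    ultimately show "((- real n) gchoose l) * ((- real n - real l) gchoose (s - l)) * (- e) ^ l =
      pochhammer (real n) l / fact l * e ^ l * ((- real n - real l) gchoose (s - l))"
      by (simp add: power_mult_distrib[symmetric] algebra_simps)
  qed
  finally show ?thesis .
qed

lemma fps_neg_binomial_mult_nth:
  "fps_nth (fps_neg_binomial n (1 - e) * F) t = (\<Sum>l\<le>t. pochhammer (real n) l / fact l * e ^ l *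
      fps_nth (fps_binomial (- real n - real l) * F) (t - l))"
proof -
  have "fps_nth (fps_neg_binomial n (1 - e) * F) t = (\<Sum>s\<le>t. (\<Sum>l\<le>s. pochhammer (real n) l / fact l * e ^ l *
        ((- real n - real l) gchoose (s - l))) * fps_nth F (t - s))"
    by (simp add: fps_mult_nth fps_neg_binomial_nth_expand atLeast0AtMost)
  also have "\<dots> = (\<Sum>s\<le>t. \<Sum>l\<le>s. pochhammer (real n) l / fact l * e ^ l *
        (((- real n - real l) gchoose (s - l)) * fps_nth F (t - s)))"
    by (intro sum.cong refl, subst sum_distrib_right, intro sum.cong refl) (simp add: algebra_simps)
  also have "\<dots> = (\<Sum>l\<le>t. \<Sum>s\<in>{l..t}. pochhammer (real n) l / fact l * e ^ l *
        (((- real n - real l) gchoose (s - l)) * fps_nth F (t - s)))"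
    by (rule sum_atMost_triangle_swap)
  also have "\<dots> = (\<Sum>l\<le>t. pochhammer (real n) l / fact l * e ^ l *
      fps_nth (fps_binomial (- real n - real l) * F) (t - l))"
  proof (intro sum.cong refl)
    fix l assume l: "l \<in> {..t}"
    have "fps_nth (fps_binomial (- real n - real l) * F) (t - l) =
        (\<Sum>j=0..t - l. ((- real n - real l) gchoose j) * fps_nth F (t - l - j))"
      by (simp add: fps_mult_nth)
    also have "\<dots> = (\<Sum>s\<in>{l..t}. ((- real n - real l) gchoose (s - l)) * fps_nth F (t - s))"
      using l by (intro sum.reindex_bij_witness[of _ "\<lambda>s. s - l" "\<lambda>j. j + l"]) (auto simp: add.commute)
    finally show "(\<Sum>s\<in>{l..t}. pochhammer (real n) l / fact l * e ^ l *
        (((- real n - real l) gchoose (s - l)) * fps_nth F (t - s))) =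
      pochhammer (real n) l / fact l * e ^ l * fps_nth (fps_binomial (- real n - real l) * F) (t - l)"
      by (simp add: sum_distrib_left)
  qed
  finally show ?thesis .
qed


lemma sum_PiE_insert:
  assumes "x \<notin> J"
  shows "(\<Sum>g\<in>PiE (insert x J) B. F g) = (\<Sum>y\<in>B x. \<Sum>g\<in>PiE J B. F (g(x := y)))"
proof -
  have "(\<Sum>g\<in>PiE (insert x J) B. F g) = (\<Sum>g\<in>(\<lambda>(y, g). g(x := y)) ` (B x \<times> PiE J B). F g)"
    by (simp add: PiE_insert_eq)
  also have "\<dots> = (\<Sum>yg\<in>B x \<times> PiE J B. F ((\<lambda>(y, g). g(x := y)) yg))"
    using sum.reindex[OF inj_combinator[OF assms], of F B] by (simp add: comp_def)
  also have "\<dots> = (\<Sum>y\<in>B x. \<Sum>g\<in>PiE J B. F (g(x := y)))"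
    by (simp add: sum.cartesian_product split_def)
  finally show ?thesis .
qed

lemma sum_PiE_remove:
  assumes "i \<in> I"
  shows "(\<Sum>l\<in>PiE I (\<lambda>_. A). F l) = (\<Sum>l\<in>PiE (I - {i}) (\<lambda>_. A). \<Sum>j\<in>A. F (l(i := j)))"
proof -
  have "I = insert i (I - {i})" using assms by auto
  then have "(\<Sum>l\<in>PiE I (\<lambda>_. A). F l) = (\<Sum>j\<in>A. \<Sum>l\<in>PiE (I - {i}) (\<lambda>_. A). F (l(i := j)))"
    by (metis Diff_iff insertI1 sum_PiE_insert)
  then show ?thesis by (simp only: sum.swap[of _ A])
qed

lemma sum_fun_upd_remove:
  assumes "finite I" "i \<in> I"
  shows "sum (l(i := j)) I = sum l (I - {i}) + j"
proof -
  have "sum (l(i := j)) (I - {i}) = sum l (I - {i})" by (intro sum.cong) auto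
  then show ?thesis using assms by (simp add: sum.remove add.commute)
qed

lemma chu_vandermonde_gbinomial:
  fixes c b :: real
  assumes "c > 0"
  shows "(- 1) ^ M * pochhammer c M / fact M *
    (\<Sum>j\<le>M. pochhammer (- real M) j / pochhammer c j * (pochhammer b j / fact j)) = (b - c) gchoose M"
proof -
  have "\<forall>k\<in>{0..<M}. c \<noteq> - of_nat k" using assms by auto
  from Vandermonde_pochhammer[where a = b and n = M, OF this]
  have "(\<Sum>j\<le>M. pochhammer (- real M) j / pochhammer c j * (pochhammer b j / fact j)) =
      pochhammer (c - b) M / pochhammer c M"
    by (simp add: atMost_atLeast0 of_nat_fact field_simps)
  moreover have "pochhammer c M > 0" using assms by (rule pochhammer_pos)
  ultimately show ?thesis by (simp add: gbinomial_pochhammer)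
qed

text \<open>The terms \<open>j > m - L\<close> vanish, and splitting off \<open>L\<close> factors from both Pochhammer
  symbols in the summand reduces the sum to the Chu--Vandermonde sum of length \<open>m - L\<close>.\<close>
lemma truncated_chu_vandermonde:
  fixes \<gamma> b :: real
  assumes "\<gamma> > 0" "L \<le> m"
  shows "(- 1) ^ m * pochhammer \<gamma> m / fact m *
     (\<Sum>j\<le>m. pochhammer (- real m) (L + j) / pochhammer \<gamma> (L + j) * (pochhammer b j / fact j))
   = (b - \<gamma> - real L) gchoose (m - L)"
proof -
  define M where "M = m - L"
  have m: "m = L + M" using assms M_def by simp
  have pos: "pochhammer \<gamma> L > 0" "pochhammer (\<gamma> + real L) j > 0" "pochhammer (real M + 1) L > 0" for j
    using assms by (auto intro!: pochhammer_pos)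
  have split: "pochhammer (- real m) (L + j) = pochhammer (- real m) L * pochhammer (- real M) j"
    "pochhammer \<gamma> (L + j) = pochhammer \<gamma> L * pochhammer (\<gamma> + real L) j" for j
    using pochhammer_product'[of "- real m" L j] pochhammer_product'[of \<gamma> L j] m by simp_all
  have "(\<Sum>j\<le>m. pochhammer (- real m) (L + j) / pochhammer \<gamma> (L + j) * (pochhammer b j / fact j)) =
      (\<Sum>j\<le>M. pochhammer (- real m) (L + j) / pochhammer \<gamma> (L + j) * (pochhammer b j / fact j))"
  proof (rule sum.mono_neutral_right)
    show "\<forall>j\<in>{..m} - {..M}. pochhammer (- real m) (L + j) / pochhammer \<gamma> (L + j) *
        (pochhammer b j / fact j) = 0"
      using assms(2) by (auto simp: M_def pochhammer_of_nat_eq_0_iff)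
  qed (auto simp: m)
  also have "\<dots> = pochhammer (- real m) L / pochhammer \<gamma> L *
      (\<Sum>j\<le>M. pochhammer (- real M) j / pochhammer (\<gamma> + real L) j * (pochhammer b j / fact j))"
    unfolding sum_distrib_left using pos by (intro sum.cong refl, unfold split) (simp add: field_simps)
  finally have sum_eq: "(\<Sum>j\<le>m. pochhammer (- real m) (L + j) / pochhammer \<gamma> (L + j) * (pochhammer b j / fact j)) =
      pochhammer (- real m) L / pochhammer \<gamma> L *
      (\<Sum>j\<le>M. pochhammer (- real M) j / pochhammer (\<gamma> + real L) j * (pochhammer b j / fact j))" .
  have "pochhammer (- real m) L = (- 1) ^ L * pochhammer (real M + 1) L"
    using pochhammer_minus[of "real m" L] m by simp
  moreover have "(fact m :: real) = fact M * pochhammer (real M + 1) L"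
    unfolding m pochhammer_fact using pochhammer_product'[of 1 M L] by (simp add: add.commute)
  moreover have "pochhammer \<gamma> m = pochhammer \<gamma> L * pochhammer (\<gamma> + real L) M"
    unfolding m by (rule pochhammer_product')
  moreover have "(- 1 :: real) ^ m * (- 1) ^ L = (- 1) ^ M"
    unfolding m by (simp add: power_add flip: power_mult_distrib)
  ultimately have "(- 1) ^ m * pochhammer \<gamma> m / fact m * (pochhammer (- real m) L / pochhammer \<gamma> L) =
      (- 1) ^ M * pochhammer (\<gamma> + real L) M / fact M"
    using pos by (simp add: field_simps)
  then show ?thesis
    unfolding sum_eq M_def[symmetric] mult.assoc[symmetric, of "(- 1) ^ m * pochhammer \<gamma> m / fact m"]
    using chu_vandermonde_gbinomial[of "\<gamma> + real L" M b] assms(1) by (simp add: diff_diff_eq)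
qed

lemma sum_PiE_truncated_chu_vandermonde:
  fixes w :: "nat \<Rightarrow> nat \<Rightarrow> real" and b \<gamma> :: real
  assumes fin: "finite I" and i: "i \<in> I" and \<gamma>: "\<gamma> > 0"
  shows "(- 1) ^ m * pochhammer \<gamma> m / fact m *
     (\<Sum>l\<in>PiE I (\<lambda>_. {..m}). pochhammer (- real m) (sum l I) / pochhammer \<gamma> (sum l I) *
         (pochhammer b (l i) / fact (l i)) * (\<Prod>q\<in>I-{i}. w q (l q)))
   = (\<Sum>l\<in>PiE (I-{i}) (\<lambda>_. {..m}). if sum l (I-{i}) \<le> m then
        (\<Prod>q\<in>I-{i}. w q (l q)) * ((b - \<gamma> - real (sum l (I-{i}))) gchoose (m - sum l (I-{i}))) else 0)"
proof -
  let ?J = "I - {i}"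
  have inner: "(- 1) ^ m * pochhammer \<gamma> m / fact m * (\<Sum>j\<le>m. pochhammer (- real m) (sum l ?J + j) /
        pochhammer \<gamma> (sum l ?J + j) * (pochhammer b j / fact j)) =
      (if sum l ?J \<le> m then (b - \<gamma> - real (sum l ?J)) gchoose (m - sum l ?J) else 0)" for l
  proof (cases "sum l ?J \<le> m")
    case True
    then show ?thesis using truncated_chu_vandermonde[OF \<gamma> True, of b] by simp
  next
    case False
    then have "pochhammer (- real m) (sum l ?J + j) = 0" for j
      by (simp add: pochhammer_of_nat_eq_0_iff)
    then show ?thesis using False by simp
  qed
  have upd: "(\<Prod>q\<in>?J. w q ((l(i := j)) q)) = (\<Prod>q\<in>?J. w q (l q))" for l j
    by (intro prod.cong) auto
  have E: "(\<Sum>l\<in>PiE I (\<lambda>_. {..m}). pochhammer (- real m) (sum l I) / pochhammer \<gamma> (sum l I) *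
         (pochhammer b (l i) / fact (l i)) * (\<Prod>q\<in>?J. w q (l q))) =
      (\<Sum>l\<in>PiE ?J (\<lambda>_. {..m}). (\<Prod>q\<in>?J. w q (l q)) * (\<Sum>j\<le>m. pochhammer (- real m) (sum l ?J + j) /
        pochhammer \<gamma> (sum l ?J + j) * (pochhammer b j / fact j)))"
    unfolding sum_PiE_remove[OF i, where A = "{..m}"] sum_distrib_left
    by (intro sum.cong refl) (simp only: sum_fun_upd_remove[OF fin i] upd fun_upd_same, simp add: mult_ac)
  show ?thesis
    unfolding E sum_distrib_left[of "(- 1) ^ m * pochhammer \<gamma> m / fact m"]
    by (intro sum.cong refl, subst mult.left_commute[of "(- 1) ^ m * pochhammer \<gamma> m / fact m"],
        subst inner) simp
qed

definition pochhammer_weight :: "nat set \<Rightarrow> (nat \<Rightarrow> nat) \<Rightarrow> (nat \<Rightarrow> real) \<Rightarrow> (nat \<Rightarrow> nat) \<Rightarrow> real" where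
  "pochhammer_weight J n e l = (\<Prod>q\<in>J. pochhammer (real (n q)) (l q) / fact (l q) * e q ^ l q)"

lemma pochhammer_weight_insert:
  assumes "finite J" "x \<notin> J"
  shows "pochhammer_weight (insert x J) n e (g(x := l)) =
    pochhammer (real (n x)) l / fact l * e x ^ l * pochhammer_weight J n e g"
proof -
  have "pochhammer_weight J n e (g(x := l)) = pochhammer_weight J n e g"
    unfolding pochhammer_weight_def using assms(2) by (intro prod.cong) auto
  then show ?thesis using assms by (simp add: pochhammer_weight_def)
qed

lemma fps_nth_binomial_mult_neg_binomial:
  "fps_nth (fps_binomial a * (fps_neg_binomial n (1 - e) * F)) t =
   (\<Sum>l\<le>t. pochhammer (real n) l / fact l * e ^ l * fps_nth (fps_binomial (a - real n - real l) * F) (t - l))"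
proof -
  have merge: "fps_binomial (- real n - real l) * (fps_binomial a * F) = fps_binomial (a - real n - real l) * F" for l
    by (simp add: mult.assoc[symmetric] fps_binomial_add_mult[symmetric] algebra_simps)
  have comm: "fps_binomial a * (fps_neg_binomial n (1 - e) * F) = fps_neg_binomial n (1 - e) * (fps_binomial a * F)"
    by (simp only: mult.left_commute)
  show ?thesis
    unfolding comm fps_neg_binomial_mult_nth merge by simp
qed

lemma fps_nth_binomial_mult_prod_neg_binomial:
  fixes n :: "nat \<Rightarrow> nat" and e :: "nat \<Rightarrow> real"
  assumes "finite J"
  shows "t \<le> T \<Longrightarrow> fps_nth (fps_binomial a * (\<Prod>q\<in>J. fps_neg_binomial (n q) (1 - e q))) t =
    (\<Sum>l\<in>PiE J (\<lambda>_. {..T}). if sum l J \<le> t then pochhammer_weight J n e l *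
       ((a - real (sum n J) - real (sum l J)) gchoose (t - sum l J)) else 0)"
  using assms
proof (induction J arbitrary: a t rule: finite_induct)
  case empty
  then show ?case by (simp add: pochhammer_weight_def)
next
  case (insert x J)
  let ?P = "\<Prod>q\<in>J. fps_neg_binomial (n q) (1 - e q)"
  let ?c = "\<lambda>l. pochhammer (real (n x)) l / fact l * e x ^ l"
  let ?term = "\<lambda>l g. if l + sum g J \<le> t then ?c l * pochhammer_weight J n e g *
      ((a - real (n x + sum n J) - real (l + sum g J)) gchoose (t - (l + sum g J))) else 0"
  have "fps_nth (fps_binomial a * (\<Prod>q\<in>insert x J. fps_neg_binomial (n q) (1 - e q))) t =
      (\<Sum>l\<le>t. ?c l * fps_nth (fps_binomial (a - real (n x) - real l) * ?P) (t - l))"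
    using insert.hyps by (simp add: fps_nth_binomial_mult_neg_binomial)
  also have "\<dots> = (\<Sum>l\<le>t. \<Sum>g\<in>PiE J (\<lambda>_. {..T}). ?term l g)"
  proof (intro sum.cong refl)
    fix l assume l: "l \<in> {..t}"
    have "t - l \<le> T" using insert.prems by simp
    then have "?c l * fps_nth (fps_binomial (a - real (n x) - real l) * ?P) (t - l) =
        (\<Sum>g\<in>PiE J (\<lambda>_. {..T}). ?c l * (if sum g J \<le> t - l then pochhammer_weight J n e g *
          ((a - real (n x) - real l - real (sum n J) - real (sum g J)) gchoose (t - l - sum g J)) else 0))"
      by (simp only: insert.IH sum_distrib_left)
    also have "\<dots> = (\<Sum>g\<in>PiE J (\<lambda>_. {..T}). ?term l g)"
    proof (intro sum.cong refl)
      fix g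
      have c1: "(sum g J \<le> t - l) = (l + sum g J \<le> t)" and c2: "t - l - sum g J = t - (l + sum g J)"
        and c3: "a - real (n x) - real l - real (sum n J) - real (sum g J) =
          a - real (n x + sum n J) - real (l + sum g J)"
        using l by auto
      show "?c l * (if sum g J \<le> t - l then pochhammer_weight J n e g *
          ((a - real (n x) - real l - real (sum n J) - real (sum g J)) gchoose (t - l - sum g J)) else 0) =
          ?term l g"
        unfolding c1 c2 c3 by simp
    qed
    finally show "?c l * fps_nth (fps_binomial (a - real (n x) - real l) * ?P) (t - l) =
        (\<Sum>g\<in>PiE J (\<lambda>_. {..T}). ?term l g)" .
  qed
  also have "\<dots> = (\<Sum>l\<le>T. \<Sum>g\<in>PiE J (\<lambda>_. {..T}). ?term l g)"
    using insert.prems by (intro sum.mono_neutral_left) auto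
  also have "\<dots> = (\<Sum>l\<in>PiE (insert x J) (\<lambda>_. {..T}). if sum l (insert x J) \<le> t then
      pochhammer_weight (insert x J) n e l *
      ((a - real (sum n (insert x J)) - real (sum l (insert x J))) gchoose (t - sum l (insert x J))) else 0)"
    unfolding sum_PiE_insert[OF insert.hyps(2)]
  proof (intro sum.cong refl)
    fix l :: nat and g
    have "sum (g(x := l)) (insert x J) = sum g (insert x J - {x}) + l"
      using insert.hyps by (intro sum_fun_upd_remove) auto
    then have "sum (g(x := l)) (insert x J) = l + sum g J"
      using insert.hyps by (simp add: add.commute)
    moreover have "sum n (insert x J) = n x + sum n J" using insert.hyps by simp
    ultimately show "?term l g = (if sum (g(x := l)) (insert x J) \<le> t then
        pochhammer_weight (insert x J) n e (g(x := l)) * ((a - real (sum n (insert x J)) -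
        real (sum (g(x := l)) (insert x J))) gchoose (t - sum (g(x := l)) (insert x J))) else 0)"
      by (simp only: pochhammer_weight_insert[OF insert.hyps])
  qed
  finally show ?case .
qed

lemma sum_PiE_pochhammer_eq_fps_nth:
  assumes "finite I" "i \<in> I" "\<gamma> > 0"
  shows "(- 1) ^ m * pochhammer \<gamma> m / fact m *
     (\<Sum>l\<in>PiE I (\<lambda>_. {..m}). pochhammer (- real m) (sum l I) / pochhammer \<gamma> (sum l I) *
         (pochhammer b (l i) / fact (l i)) * pochhammer_weight (I - {i}) n e l)
   = fps_nth (fps_binomial (b - \<gamma> + real (sum n (I - {i}))) *
       (\<Prod>q\<in>I-{i}. fps_neg_binomial (n q) (1 - e q))) m"
proof -
  have "b - \<gamma> - real k = b - \<gamma> + real (sum n (I - {i})) - real (sum n (I - {i})) - real k" for k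
    by simp
  then show ?thesis
    unfolding pochhammer_weight_def
      sum_PiE_truncated_chu_vandermonde[OF assms, of m b "\<lambda>q j. pochhammer (real (n q)) j / fact j * e q ^ j"]
      fps_nth_binomial_mult_prod_neg_binomial[OF finite_Diff[OF assms(1)] order_refl]
    by (simp only: pochhammer_weight_def)
qed

section \<open>The explicit polynomials\<close>

definition odds :: "(nat \<Rightarrow> real) \<Rightarrow> nat \<Rightarrow> real" where
  "odds c q = c q / (1 - c q)"

lemma odds_inj_nonzero:
  assumes "\<forall>q\<in>I. 0 < c q \<and> c q < 1" and "inj_on c I"
  shows "inj_on (odds c) I" "\<forall>q\<in>I. odds c q \<noteq> 0"
proof -
  show "inj_on (odds c) I"
  proof (rule inj_onI)
    fix x y assume x: "x \<in> I" and y: "y \<in> I" and e: "odds c x = odds c y"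
    have "1 - c x > 0" "1 - c y > 0" using assms x y by auto
    with e have "c x * (1 - c y) = c y * (1 - c x)" by (simp add: odds_def field_simps)
    then have "c x = c y" by (simp add: algebra_simps)
    then show "x = y" using assms(2) x y by (auto dest: inj_onD)
  qed
  show "\<forall>q\<in>I. odds c q \<noteq> 0" using assms(1) by (auto simp: odds_def)
qed

lemma node_ratio_odds:
  assumes "0 < c i" "c i < 1" "0 < c q" "c q < 1" "c q \<noteq> c i"
  shows "node_ratio (odds c) i q = (1 - c i) * c q / (c q - c i)"
proof -
  have "1 - c q \<noteq> 0" "1 - c i \<noteq> 0" "c q - c i \<noteq> 0" using assms by auto
  then show ?thesis unfolding node_ratio_def odds_def by (simp add: divide_simps) (simp add: algebra_simps)
qed

definition formula_prefactor :: "nat \<Rightarrow> real \<Rightarrow> (nat \<Rightarrow> real) \<Rightarrow> (nat \<Rightarrow> nat) \<Rightarrow> nat \<Rightarrow> real" where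
  "formula_prefactor p \<beta> c n i = (- 1) ^ (n i - 1) * (1 - c i) powr (real (msize p n) - 1 + \<beta>)
    / (fact (n i - 1) * pochhammer \<beta> (msize p n - n i) * c i ^ (n i - 1))
    * (\<Prod>q\<in>{1..p}-{i}. ((1 - c q) / (c i - c q)) ^ n q)"

definition formula_coeff :: "nat \<Rightarrow> real \<Rightarrow> (nat \<Rightarrow> real) \<Rightarrow> (nat \<Rightarrow> nat) \<Rightarrow> nat \<Rightarrow> (nat \<Rightarrow> nat) \<Rightarrow> real" where
  "formula_coeff p \<beta> c n i l = pochhammer (1 - real (n i)) (\<Sum>q=1..p. l q)
         / pochhammer (\<beta> + real (msize p n) - real (n i)) (\<Sum>q=1..p. l q)
         * (1 - c i) ^ l i / fact (l i)
         * (\<Prod>q\<in>{1..p}-{i}. pochhammer (real (n q)) (l q) / fact (l q)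
              * ((1 - c i) * c q / (c q - c i)) ^ l q)"

definition meixner_typeI_poly :: "nat \<Rightarrow> real \<Rightarrow> (nat \<Rightarrow> real) \<Rightarrow> (nat \<Rightarrow> nat) \<Rightarrow> nat \<Rightarrow> real poly" where
  "meixner_typeI_poly p \<beta> c n i = (if n i = 0 then 0 else
     smult (formula_prefactor p \<beta> c n i)
       (\<Sum>l\<in>PiE {1..p} (\<lambda>_. {0..<n i}). smult (formula_coeff p \<beta> c n i l) (pochhammer_poly \<beta> (l i))))"

lemma poly_meixner_typeI_poly:
  assumes "n i \<ge> 1"
  shows "poly (meixner_typeI_poly p \<beta> c n i) x = meixner_typeI_formula p \<beta> c n i x"
proof -
  have "poly (meixner_typeI_poly p \<beta> c n i) x = formula_prefactor p \<beta> c n i *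
     (\<Sum>l\<in>PiE {1..p} (\<lambda>_. {0..<n i}). formula_coeff p \<beta> c n i l * pochhammer (x + \<beta>) (l i))"
    using assms by (simp add: meixner_typeI_poly_def poly_sum poly_pochhammer_poly)
  also have "\<dots> = meixner_typeI_formula p \<beta> c n i x"
    unfolding meixner_typeI_formula_def formula_prefactor_def[symmetric]
    by (intro arg_cong[where f = "(*) (formula_prefactor p \<beta> c n i)"] sum.cong refl)
       (simp add: formula_coeff_def divide_inverse mult_ac add.commute)
  finally show ?thesis .
qed

lemma degree_meixner_typeI_poly:
  assumes "i \<in> {1..p}"
  shows "degree (meixner_typeI_poly p \<beta> c n i) \<le> n i - 1"
proof -
  have "degree (\<Sum>l\<in>PiE {1..p} (\<lambda>_. {0..<n i}). smult (formula_coeff p \<beta> c n i l) (pochhammer_poly \<beta> (l i)))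
      \<le> n i - 1"
  proof (rule degree_sum_le)
    fix l assume "l \<in> PiE {1..p} (\<lambda>_. {0..<n i})"
    then have "l i < n i" using assms by (auto simp: PiE_iff)
    then have "degree (pochhammer_poly \<beta> (l i)) \<le> n i - 1"
      using pochhammer_poly_monic[of \<beta> "l i"] by simp
    then show "degree (smult (formula_coeff p \<beta> c n i l) (pochhammer_poly \<beta> (l i))) \<le> n i - 1"
      by (metis degree_smult_le le_trans)
  qed (simp add: finite_PiE)
  then show ?thesis
    using order.trans[OF degree_smult_le] by (simp add: meixner_typeI_poly_def)
qed

lemma formula_coeff_eq:
  assumes cq: "\<forall>q\<in>{1..p}. 0 < c q \<and> c q < 1" and inj: "inj_on c {1..p}"
    and i: "i \<in> {1..p}" and ni: "n i \<ge> 1"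
  shows "formula_coeff p \<beta> c n i l =
    pochhammer (- real (n i - 1)) (sum l {1..p}) /
      pochhammer (\<beta> + real (sum n ({1..p} - {i}))) (sum l {1..p}) *
    ((1 - c i) ^ l i / fact (l i)) * pochhammer_weight ({1..p} - {i}) n (node_ratio (odds c) i) l"
proof -
  have "msize p n = n i + sum n ({1..p} - {i})"
    unfolding msize_def using i by (simp add: sum.remove)
  then have e: "1 - real (n i) = - real (n i - 1)"
    "\<beta> + real (msize p n) - real (n i) = \<beta> + real (sum n ({1..p} - {i}))"
    using ni by simp_all
  have "node_ratio (odds c) i q = (1 - c i) * c q / (c q - c i)" if "q \<in> {1..p} - {i}" for q
  proof (rule node_ratio_odds)
    show "c q \<noteq> c i" using inj_on_contraD[OF inj, of q i] that i by auto
  qed (use cq i that in auto)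
  then have "(\<Prod>q\<in>{1..p}-{i}. pochhammer (real (n q)) (l q) / fact (l q) * ((1 - c i) * c q / (c q - c i)) ^ l q) =
      pochhammer_weight ({1..p} - {i}) n (node_ratio (odds c) i) l"
    unfolding pochhammer_weight_def by (intro prod.cong) auto
  then show ?thesis
    unfolding formula_coeff_def e by (simp only: times_divide_eq_right)
qed

lemma formula_prefactor_eq:
  assumes cq: "\<forall>q\<in>{1..p}. 0 < c q \<and> c q < 1" and inj: "inj_on c {1..p}" and i: "i \<in> {1..p}"
  shows "formula_prefactor p \<beta> c n i =
    (- 1) ^ (n i - 1) * (1 - c i) powr (real (msize p n) - 1 + \<beta>)
      / (fact (n i - 1) * pochhammer \<beta> (msize p n - n i) * c i ^ (n i - 1))
      / ((1 - c i) ^ sum n ({1..p} - {i}) * node_gap_prod {1..p} (odds c) n i)"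
proof -
  have "((1 - c q) / (c i - c q)) ^ n q = 1 / ((1 - c i) ^ n q * (odds c i - odds c q) ^ n q)"
    if q: "q \<in> {1..p} - {i}" for q
  proof -
    have "c q < 1" "c i < 1" using cq q i by auto
    moreover have "c i \<noteq> c q" using inj_on_contraD[OF inj, of i q] q i by auto
    ultimately have nz: "1 - c q \<noteq> 0" "1 - c i \<noteq> 0" "c i - c q \<noteq> 0" by auto
    then have "odds c i - odds c q = (c i - c q) / ((1 - c i) * (1 - c q))"
      unfolding odds_def by (simp add: divide_simps) (simp add: algebra_simps)
    moreover have "\<And>a b d :: real. a \<noteq> 0 \<Longrightarrow> d \<noteq> 0 \<Longrightarrow> b \<noteq> 0 \<Longrightarrow> d / b = 1 / (a * (b / (a * d)))"
      by simp
    ultimately have "(1 - c q) / (c i - c q) = 1 / ((1 - c i) * (odds c i - odds c q))"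
      using nz by metis
    then show ?thesis by (simp add: power_one_over power_mult_distrib)
  qed
  then have "(\<Prod>q\<in>{1..p}-{i}. ((1 - c q) / (c i - c q)) ^ n q) =
      1 / ((1 - c i) ^ sum n ({1..p} - {i}) * node_gap_prod {1..p} (odds c) n i)"
    by (simp add: prod_dividef prod.distrib node_gap_prod_def power_sum)
  then show ?thesis unfolding formula_prefactor_def by simp
qed

lemma formula_prefactor_mult_eq:
  assumes \<beta>: "\<beta> > 0" and cq: "\<forall>q\<in>{1..p}. 0 < c q \<and> c q < 1" and inj: "inj_on c {1..p}"
    and i: "i \<in> {1..p}" and ni: "n i \<ge> 1"
  defines "m \<equiv> n i - 1" and "K \<equiv> sum n ({1..p} - {i})"
  shows "formula_prefactor p \<beta> c n i * (pochhammer \<beta> r * c i ^ r * (1 - c i) powr (- (\<beta> + real r)) *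
      (fact m / ((- 1) ^ m * pochhammer (\<beta> + real K) m) * F)) =
    pochhammer \<beta> r / pochhammer \<beta> (msize p n - 1) *
      (odds c i ^ r / odds c i ^ m / node_gap_prod {1..p} (odds c) n i * F)"
proof -
  define G where "G = node_gap_prod {1..p} (odds c) n i"
  have ci: "0 < c i" "c i < 1" using cq i by auto
  have N: "msize p n = K + m + 1"
    using i ni by (simp add: msize_def K_def m_def sum.remove)
  have G: "G \<noteq> 0"
    using odds_inj_nonzero[OF cq inj] i unfolding G_def node_gap_prod_def
    by (auto simp: prod_zero_iff dest: inj_onD)
  have pos: "pochhammer \<beta> K > 0" "pochhammer (\<beta> + real K) m > 0" using \<beta> by (auto intro!: pochhammer_pos)
  have powers: "(1 - c i) powr (real (msize p n) - 1 + \<beta>) * (1 - c i) powr (- (\<beta> + real r)) =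
      (1 - c i) ^ (K + m) / (1 - c i) ^ r"
    using ci powr_realpow[of "1 - c i" "K + m"] by (simp add: N powr_realpow powr_diff flip: powr_add)
  have poch: "pochhammer \<beta> K * pochhammer (\<beta> + real K) m = pochhammer \<beta> (msize p n - 1)"
    by (simp add: N pochhammer_product')
  have "msize p n - n i = K" using N ni by (simp add: m_def)
  then have "formula_prefactor p \<beta> c n i = (- 1) ^ m * (1 - c i) powr (real (msize p n) - 1 + \<beta>)
      / (fact m * pochhammer \<beta> K * c i ^ m) / ((1 - c i) ^ K * G)"
    by (simp only: formula_prefactor_eq[OF cq inj i] K_def m_def G_def)
  then have "formula_prefactor p \<beta> c n i * (pochhammer \<beta> r * c i ^ r * (1 - c i) powr (- (\<beta> + real r)) *
      (fact m / ((- 1) ^ m * pochhammer (\<beta> + real K) m) * F)) =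
      pochhammer \<beta> r * c i ^ r * ((1 - c i) powr (real (msize p n) - 1 + \<beta>) * (1 - c i) powr (- (\<beta> + real r)))
      * F / ((pochhammer \<beta> K * pochhammer (\<beta> + real K) m) * c i ^ m * (1 - c i) ^ K * G)"
    using pos G by (simp add: field_simps)
  also have "\<dots> = pochhammer \<beta> r / pochhammer \<beta> (msize p n - 1) * (odds c i ^ r / odds c i ^ m / G * F)"
    unfolding powers poch using ci G pos by (simp add: odds_def field_simps power_divide power_add)
  finally show ?thesis unfolding G_def .
qed

lemma sums_falling_fact_meixner_typeI_poly_expansion:
  assumes \<beta>: "\<beta> > 0" and ci: "0 < c i" "c i < 1" and ni: "n i \<ge> 1"
  shows "(\<lambda>k. falling_fact r (real k) * poly (meixner_typeI_poly p \<beta> c n i) (real k) * meixner_weight \<beta> (c i) k)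
    sums (formula_prefactor p \<beta> c n i * (\<Sum>l\<in>PiE {1..p} (\<lambda>_. {..n i - 1}). formula_coeff p \<beta> c n i l *
      (pochhammer \<beta> (r + l i) * c i ^ r * (1 - c i) powr (- (\<beta> + real r + real (l i))))))"
proof -
  have "{0..<n i} = {..n i - 1}" using ni by auto
  then have "(\<lambda>k. falling_fact r (real k) * poly (meixner_typeI_poly p \<beta> c n i) (real k) * meixner_weight \<beta> (c i) k) =
    (\<lambda>k. formula_prefactor p \<beta> c n i * (\<Sum>l\<in>PiE {1..p} (\<lambda>_. {..n i - 1}). formula_coeff p \<beta> c n i l *
       (falling_fact r (real k) * pochhammer (real k + \<beta>) (l i) * meixner_weight \<beta> (c i) k)))"
    using ni by (auto simp: meixner_typeI_poly_def poly_sum poly_pochhammer_poly sum_distrib_left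
        sum_distrib_right mult_ac)
  then show ?thesis
    using sums_falling_fact_pochhammer_meixner_weight[OF \<beta> ci] by (simp only:) (intro sums_mult sums_sum)
qed

lemma sums_falling_fact_meixner_typeI_poly:
  assumes \<beta>: "\<beta> > 0" and cq: "\<forall>q\<in>{1..p}. 0 < c q \<and> c q < 1" and inj: "inj_on c {1..p}"
    and i: "i \<in> {1..p}"
  shows "(\<lambda>k. falling_fact r (real k) * poly (meixner_typeI_poly p \<beta> c n i) (real k) * meixner_weight \<beta> (c i) k)
    sums (pochhammer \<beta> r / pochhammer \<beta> (msize p n - 1) * local_residue {1..p} (odds c) n i r)"
proof (cases "n i = 0")
  case True
  then show ?thesis by (simp add: meixner_typeI_poly_def local_residue_def)
next
  case False
  define I where "I = {1..p}"
  define m where "m = n i - 1"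
  define K where "K = sum n (I - {i})"
  define \<gamma> where "\<gamma> = \<beta> + real K"
  have ci: "0 < c i" "c i < 1" using cq i by auto
  define Mom where "Mom j = pochhammer \<beta> (r + j) * c i ^ r * (1 - c i) powr (- (\<beta> + real r + real j))" for j
  define T where "T l = pochhammer (- real m) (sum l I) / pochhammer \<gamma> (sum l I) *
    (pochhammer (\<beta> + real r) (l i) / fact (l i)) * pochhammer_weight (I - {i}) n (node_ratio (odds c) i) l"
    for l :: "nat \<Rightarrow> nat"
  define F where "F = fps_nth (fps_binomial (real r) * residue_series I (odds c) n i) m"
  have series: "(\<lambda>k. falling_fact r (real k) * poly (meixner_typeI_poly p \<beta> c n i) (real k) *
      meixner_weight \<beta> (c i) k) sums
      (formula_prefactor p \<beta> c n i * (\<Sum>l\<in>PiE I (\<lambda>_. {..m}). formula_coeff p \<beta> c n i l * Mom (l i)))"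
    using sums_falling_fact_meixner_typeI_poly_expansion[where c = c and i = i and n = n, OF \<beta> ci] False
    by (simp add: Mom_def I_def m_def)
  have "formula_coeff p \<beta> c n i l * Mom (l i) = pochhammer \<beta> r * c i ^ r * (1 - c i) powr (- (\<beta> + real r)) * T l" for l
  proof -
    have "(1 - c i) powr (- (\<beta> + real r + real (l i))) = (1 - c i) powr (- (\<beta> + real r)) / (1 - c i) ^ l i"
      using ci by (simp add: powr_diff powr_realpow flip: diff_conv_add_uminus)
    then show ?thesis
      using formula_coeff_eq[OF cq inj i, of n \<beta> l] False ci
      by (simp add: Mom_def T_def \<gamma>_def K_def m_def I_def pochhammer_product' field_simps)
  qed
  moreover have "(\<Sum>l\<in>PiE I (\<lambda>_. {..m}). T l) = fact m / ((- 1) ^ m * pochhammer \<gamma> m) * F"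
  proof -
    have "\<gamma> > 0" using \<beta> by (simp add: \<gamma>_def)
    then have "pochhammer \<gamma> m > 0" by (rule pochhammer_pos)
    moreover have "(- 1) ^ m * pochhammer \<gamma> m / fact m * (\<Sum>l\<in>PiE I (\<lambda>_. {..m}). T l) = F"
      using sum_PiE_pochhammer_eq_fps_nth[of I i \<gamma> m "\<beta> + real r" n "node_ratio (odds c) i"] \<open>\<gamma> > 0\<close> i
      by (simp add: T_def F_def residue_series_def \<gamma>_def K_def I_def)
    ultimately show ?thesis by (simp add: field_simps)
  qed
  ultimately have "formula_prefactor p \<beta> c n i * (\<Sum>l\<in>PiE I (\<lambda>_. {..m}). formula_coeff p \<beta> c n i l * Mom (l i)) =
      formula_prefactor p \<beta> c n i * (pochhammer \<beta> r * c i ^ r * (1 - c i) powr (- (\<beta> + real r)) *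
      (fact m / ((- 1) ^ m * pochhammer \<gamma> m) * F))"
    by (simp add: sum_distrib_left[symmetric])
  also have "\<dots> = pochhammer \<beta> r / pochhammer \<beta> (msize p n - 1) * local_residue I (odds c) n i r"
    unfolding \<gamma>_def K_def m_def I_def using formula_prefactor_mult_eq[OF \<beta> cq inj i] False
    by (simp add: local_residue_def F_def I_def m_def)
  finally show ?thesis using series by (simp add: I_def)
qed

section \<open>Existence and uniqueness\<close>

lemma power_eq_falling_fact_combination:
  "\<exists>\<alpha>. \<alpha> j = 1 \<and> (\<forall>x. x ^ j = (\<Sum>r<Suc j. \<alpha> r * falling_fact r x))"
proof -
  have "monom 1 j = 0 \<or> degree (monom (1::real) j) < Suc j" by (simp add: degree_monom_eq)
  then obtain \<alpha> where \<alpha>: "monom (1::real) j = (\<Sum>r<Suc j. smult (\<alpha> r) (falling_poly r))"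
    using monic_basis_expansion[OF falling_poly_monic] by blast
  have "\<alpha> j = coeff (\<Sum>r<Suc j. smult (\<alpha> r) (falling_poly r)) j"
    using monic_basis_coeff_top[where B = falling_poly and n = j and a = \<alpha>, OF falling_poly_monic] by simp
  then have "\<alpha> j = 1" unfolding \<alpha>[symmetric] by simp
  moreover have "x ^ j = (\<Sum>r<Suc j. \<alpha> r * falling_fact r x)" for x
    using arg_cong[OF \<alpha>, of "\<lambda>P. poly P x"] by (simp add: poly_monom poly_sum poly_falling_poly)
  ultimately show ?thesis by blast
qed

lemma sums_power_of_sums_falling_fact:
  fixes Q :: "nat \<Rightarrow> real"
  assumes falling: "\<And>r. r < N \<Longrightarrow> (\<lambda>k. falling_fact r (real k) * Q k) sums (if r = N - 1 then 1 else 0)"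
    and j: "j < N"
  shows "(\<lambda>k. real k ^ j * Q k) sums (if j = N - 1 then 1 else 0)"
proof -
  obtain \<alpha> where \<alpha>: "\<alpha> j = 1" "\<And>x. x ^ j = (\<Sum>r<Suc j. \<alpha> r * falling_fact r x)"
    using power_eq_falling_fact_combination by blast
  have "(\<lambda>k. \<Sum>r<Suc j. \<alpha> r * (falling_fact r (real k) * Q k)) sums
      (\<Sum>r<Suc j. \<alpha> r * (if r = N - 1 then 1 else 0))"
    using falling j by (intro sums_sum sums_mult) auto
  moreover have "(\<lambda>k. \<Sum>r<Suc j. \<alpha> r * (falling_fact r (real k) * Q k)) = (\<lambda>k. real k ^ j * Q k)"
    by (rule ext) (simp only: \<alpha>(2) sum_distrib_right mult.assoc)
  moreover have "(\<Sum>r<Suc j. \<alpha> r * (if r = N - 1 then 1 else 0)) = (if j = N - 1 then 1 else 0)"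
  proof (cases "j = N - 1")
    case True
    have "(\<Sum>r<Suc j. \<alpha> r * (if r = N - 1 then 1 else 0)) = (\<Sum>r\<in>{j}. \<alpha> r * (if r = N - 1 then 1 else 0))"
      by (rule sum.mono_neutral_right) (use True in auto)
    then show ?thesis using True \<alpha>(1) by simp
  next
    case False
    then show ?thesis using j by (intro trans[OF sum.neutral]) auto
  qed
  ultimately show ?thesis by simp
qed

lemma sums_falling_fact_of_sums_power:
  fixes Q :: "nat \<Rightarrow> real"
  assumes power: "\<And>j. j < N \<Longrightarrow> (\<lambda>k. real k ^ j * Q k) sums 0" and r: "r < N"
  shows "(\<lambda>k. falling_fact r (real k) * Q k) sums 0"
proof -
  have "(\<lambda>k. \<Sum>j\<le>r. coeff (falling_poly r) j * (real k ^ j * Q k)) sums (\<Sum>j\<le>r. coeff (falling_poly r) j * 0)"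
    using power r by (intro sums_sum sums_mult) auto
  moreover have "falling_fact r x = (\<Sum>j\<le>r. coeff (falling_poly r) j * x ^ j)" for x
    using poly_altdef[of "falling_poly r" x] falling_poly_monic[of r] by (simp add: poly_falling_poly)
  then have "(\<lambda>k. \<Sum>j\<le>r. coeff (falling_poly r) j * (real k ^ j * Q k)) = (\<lambda>k. falling_fact r (real k) * Q k)"
    by (simp add: sum_distrib_right mult.assoc)
  ultimately show ?thesis by simp
qed

lemma meixner_typeI_poly_is_typeI:
  assumes \<beta>: "\<beta> > 0" and cq: "\<forall>q\<in>{1..p}. 0 < c q \<and> c q < 1" and inj: "inj_on c {1..p}"
    and N: "msize p n \<ge> 1"
  shows "is_typeI p \<beta> c n (meixner_typeI_poly p \<beta> c n)"
proof -
  define Q where "Q k = (\<Sum>i=1..p. poly (meixner_typeI_poly p \<beta> c n i) (real k) * meixner_weight \<beta> (c i) k)" for k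
  have "(\<lambda>k. falling_fact r (real k) * Q k) sums (if r = msize p n - 1 then 1 else 0)"
    if r: "r < msize p n" for r
  proof -
    have "(\<lambda>k. \<Sum>i=1..p. falling_fact r (real k) * poly (meixner_typeI_poly p \<beta> c n i) (real k) *
        meixner_weight \<beta> (c i) k) sums
        (pochhammer \<beta> r / pochhammer \<beta> (msize p n - 1) * residue_sum {1..p} (odds c) n r)"
      unfolding residue_sum_def sum_distrib_left
      by (intro sums_sum sums_falling_fact_meixner_typeI_poly[OF \<beta> cq inj]) auto
    moreover have "residue_sum {1..p} (odds c) n r = (if r = msize p n - 1 then 1 else 0)"
      using residue_sum_eq[OF _ odds_inj_nonzero[OF cq inj], of n "msize p n" r] r N
      by (simp add: msize_def)
    moreover have "pochhammer \<beta> (msize p n - 1) > 0" using \<beta> by (rule pochhammer_pos)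
    moreover have "(\<lambda>k. \<Sum>i=1..p. falling_fact r (real k) * poly (meixner_typeI_poly p \<beta> c n i) (real k) *
        meixner_weight \<beta> (c i) k) = (\<lambda>k. falling_fact r (real k) * Q k)"
      by (simp add: Q_def sum_distrib_left mult.assoc)
    ultimately show ?thesis by auto
  qed
  then have "(\<lambda>k. real k ^ j * Q k) sums (if j = msize p n - 1 then 1 else 0)" if "j < msize p n" for j
    using sums_power_of_sums_falling_fact that by blast
  moreover have "(\<lambda>k. real k ^ j * Q k) =
      (\<lambda>k. \<Sum>i=1..p. real k ^ j * poly (meixner_typeI_poly p \<beta> c n i) (real k) * meixner_weight \<beta> (c i) k)" for j
    by (simp add: Q_def sum_distrib_left mult.assoc)
  moreover have "meixner_typeI_poly p \<beta> c n i = 0" if "n i = 0" for i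
    using that by (simp add: meixner_typeI_poly_def)
  ultimately show ?thesis
    unfolding is_typeI_def using degree_meixner_typeI_poly by auto
qed

lemma sums_falling_fact_pochhammer_expansion:
  assumes \<beta>: "\<beta> > 0" and cq: "\<forall>q\<in>I. 0 < c q \<and> c q < 1"
  shows "(\<lambda>k. falling_fact r (real k) * (\<Sum>q\<in>I. (\<Sum>m<n q. a q m * pochhammer (real k + \<beta>) m) *
      meixner_weight \<beta> (c q) k)) sums
    (pochhammer \<beta> r * (\<Sum>q\<in>I. odds c q ^ r *
      (\<Sum>m<n q. a q m * ((1 - c q) powr (- \<beta>) / (1 - c q) ^ m) * pochhammer (real r + \<beta>) m)))"
proof -
  have "(\<lambda>k. falling_fact r (real k) * pochhammer (real k + \<beta>) m * meixner_weight \<beta> (c q) k) sums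
      (pochhammer \<beta> r * (odds c q ^ r * ((1 - c q) powr (- \<beta>) / (1 - c q) ^ m * pochhammer (real r + \<beta>) m)))"
    if q: "q \<in> I" for q m
  proof -
    have c: "0 < c q" "c q < 1" using cq q by auto
    have "(1 - c q) powr (- (\<beta> + real r + real m)) = (1 - c q) powr (- \<beta>) / ((1 - c q) ^ r * (1 - c q) ^ m)"
      using c by (simp add: powr_diff powr_add powr_realpow flip: diff_conv_add_uminus)
    moreover have "pochhammer \<beta> (r + m) = pochhammer \<beta> r * pochhammer (real r + \<beta>) m"
      using pochhammer_product'[of \<beta> r m] by (simp add: add.commute)
    ultimately have "pochhammer \<beta> (r + m) * c q ^ r * (1 - c q) powr (- (\<beta> + real r + real m)) =
        pochhammer \<beta> r * (odds c q ^ r * ((1 - c q) powr (- \<beta>) / (1 - c q) ^ m * pochhammer (real r + \<beta>) m))"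
      using c by (simp add: odds_def field_simps power_divide)
    then show ?thesis using sums_falling_fact_pochhammer_meixner_weight[OF \<beta> c, of r m] by simp
  qed
  then have "(\<lambda>k. \<Sum>q\<in>I. \<Sum>m<n q. a q m * (falling_fact r (real k) * pochhammer (real k + \<beta>) m *
      meixner_weight \<beta> (c q) k)) sums (\<Sum>q\<in>I. \<Sum>m<n q. a q m * (pochhammer \<beta> r *
      (odds c q ^ r * ((1 - c q) powr (- \<beta>) / (1 - c q) ^ m * pochhammer (real r + \<beta>) m))))"
    by (intro sums_sum sums_mult) auto
  then show ?thesis
    by (simp add: sum_distrib_left sum_distrib_right mult_ac)
qed

lemma meixner_moments_vanish_imp_zero:
  assumes \<beta>: "\<beta> > 0" and cq: "\<forall>q\<in>{1..p}. 0 < c q \<and> c q < 1" and inj: "inj_on c {1..p}"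
    and deg: "\<forall>q\<in>{1..p}. D q = 0 \<or> degree (D q) < n q"
    and moments: "\<And>j. j < msize p n \<Longrightarrow>
      (\<lambda>k. real k ^ j * (\<Sum>q=1..p. poly (D q) (real k) * meixner_weight \<beta> (c q) k)) sums 0"
    and q: "q \<in> {1..p}"
  shows "D q = 0"
proof -
  have "\<exists>a. D q = (\<Sum>m<n q. smult (a m) (pochhammer_poly \<beta> m))" if "q \<in> {1..p}" for q
    using deg that by (intro monic_basis_expansion[OF pochhammer_poly_monic]) auto
  then obtain a where a: "\<And>q. q \<in> {1..p} \<Longrightarrow> D q = (\<Sum>m<n q. smult (a q m) (pochhammer_poly \<beta> m))"
    by metis
  define P where "P q = (\<Sum>m<n q. smult (a q m * ((1 - c q) powr (- \<beta>) / (1 - c q) ^ m)) (pochhammer_poly \<beta> m))"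
    for q
  have "(\<Sum>q\<in>{1..p}. odds c q ^ r * poly (P q) (real r)) = 0" if r: "r < msize p n" for r
  proof -
    have "(\<Sum>q=1..p. poly (D q) (real k) * meixner_weight \<beta> (c q) k) =
        (\<Sum>q=1..p. (\<Sum>m<n q. a q m * pochhammer (real k + \<beta>) m) * meixner_weight \<beta> (c q) k)" for k
      by (intro sum.cong refl) (simp add: a poly_sum poly_pochhammer_poly)
    moreover have "poly (P q) (real r) =
        (\<Sum>m<n q. a q m * ((1 - c q) powr (- \<beta>) / (1 - c q) ^ m) * pochhammer (real r + \<beta>) m)" for q
      by (simp add: P_def poly_sum poly_pochhammer_poly)
    ultimately have "(\<lambda>k. falling_fact r (real k) * (\<Sum>q=1..p. poly (D q) (real k) * meixner_weight \<beta> (c q) k)) sums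
        (pochhammer \<beta> r * (\<Sum>q\<in>{1..p}. odds c q ^ r * poly (P q) (real r)))"
      using sums_falling_fact_pochhammer_expansion[OF \<beta> cq, where r = r and n = n and a = a] by (simp only:)
    moreover have "(\<lambda>k. falling_fact r (real k) * (\<Sum>q=1..p. poly (D q) (real k) * meixner_weight \<beta> (c q) k)) sums 0"
      by (rule sums_falling_fact_of_sums_power[OF moments r])
    moreover have "pochhammer \<beta> r > 0" using \<beta> by (rule pochhammer_pos)
    ultimately show ?thesis using sums_unique2 by fastforce
  qed
  moreover have "P q = 0 \<or> degree (P q) < n q" for q
  proof (cases "n q = 0")
    case False
    have "degree (P q) \<le> n q - 1"
      unfolding P_def using pochhammer_poly_monic
      by (intro degree_sum_le) (auto intro: order.trans[OF degree_smult_le])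
    then show ?thesis using False by arith
  qed (simp add: P_def)
  ultimately have "P q = 0"
    using exp_poly_sum_eq_0_imp_eq_0[OF _ odds_inj_nonzero[OF cq inj], of n "msize p n" P q] q
    by (simp add: msize_def)
  moreover have "0 < 1 - c q" using cq q by auto
  ultimately have "a q m = 0" if "m < n q" for m
    using monic_basis_independent[OF pochhammer_poly_monic,
        where a = "\<lambda>m. a q m * ((1 - c q) powr (- \<beta>) / (1 - c q) ^ m)" and n = "n q" and m = m]
      that by (simp add: P_def)
  then show ?thesis using a[OF q] by simp
qed

lemma is_typeI_unique:
  assumes \<beta>: "\<beta> > 0" and cq: "\<forall>q\<in>{1..p}. 0 < c q \<and> c q < 1" and inj: "inj_on c {1..p}"
    and N: "msize p n \<ge> 1" and M: "is_typeI p \<beta> c n M" and i: "i \<in> {1..p}"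
  shows "M i = meixner_typeI_poly p \<beta> c n i"
proof -
  note M' = meixner_typeI_poly_is_typeI[OF \<beta> cq inj N]
  define D where "D q = M q - meixner_typeI_poly p \<beta> c n q" for q
  have "D q = 0 \<or> degree (D q) < n q" if "q \<in> {1..p}" for q
  proof (cases "n q = 0")
    case True
    then show ?thesis using M M' that unfolding is_typeI_def D_def by auto
  next
    case False
    then have "degree (M q) \<le> n q - 1" "degree (meixner_typeI_poly p \<beta> c n q) \<le> n q - 1"
      using M M' that unfolding is_typeI_def by auto
    then have "degree (D q) \<le> n q - 1"
      unfolding D_def by (metis degree_diff_le)
    then show ?thesis using False by arith
  qed
  moreover have "(\<lambda>k. real k ^ j * (\<Sum>q=1..p. poly (D q) (real k) * meixner_weight \<beta> (c q) k)) sums 0"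
    if "j < msize p n" for j
  proof -
    have "(\<lambda>k. (\<Sum>q=1..p. real k ^ j * poly (M q) (real k) * meixner_weight \<beta> (c q) k) -
        (\<Sum>q=1..p. real k ^ j * poly (meixner_typeI_poly p \<beta> c n q) (real k) * meixner_weight \<beta> (c q) k))
        sums ((if j = msize p n - 1 then 1 else 0) - (if j = msize p n - 1 then 1 else 0))"
      using M M' that unfolding is_typeI_def by (intro sums_diff) blast+
    then show ?thesis
      by (simp add: D_def sum_subtractf[symmetric] sum_distrib_left algebra_simps)
  qed
  ultimately have "D i = 0" using meixner_moments_vanish_imp_zero[OF \<beta> cq inj] i by blast
  then show ?thesis by (simp add: D_def)
qed

theorem mainTheorem9:
  fixes p :: nat and \<beta> :: real and c :: "nat \<Rightarrow> real" and n :: "nat \<Rightarrow> nat" and i :: nat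
  assumes "\<beta> > 0"
    and "\<And>q. q \<in> {1..p} \<Longrightarrow> 0 < c q \<and> c q < 1"
    and "inj_on c {1..p}"
    and "i \<in> {1..p}" and "n i \<ge> 1"
  shows "(\<exists>M. is_typeI p \<beta> c n M) \<and>
         (\<forall>M. is_typeI p \<beta> c n M \<longrightarrow>
            (\<forall>x. poly (M i) x = meixner_typeI_formula p \<beta> c n i x))"
proof -
  have cq: "\<forall>q\<in>{1..p}. 0 < c q \<and> c q < 1" using assms(2) by blast
  have "n i \<le> msize p n"
    unfolding msize_def using assms(4) by (intro member_le_sum) auto
  then have N: "msize p n \<ge> 1" using assms(5) by simp
  show ?thesis
  proof (intro conjI allI impI)
    show "\<exists>M. is_typeI p \<beta> c n M"
      using meixner_typeI_poly_is_typeI[OF assms(1) cq assms(3) N] by blast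
  next
    fix M x
    assume "is_typeI p \<beta> c n M"
    then have "M i = meixner_typeI_poly p \<beta> c n i"
      by (rule is_typeI_unique[OF assms(1) cq assms(3) N _ assms(4)])
    then show "poly (M i) x = meixner_typeI_formula p \<beta> c n i x"
      using poly_meixner_typeI_poly[where n = n and i = i, OF assms(5)] by simp
  qed
qed

end
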